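(* Let $v,a,b,c\in\mathbb{C}$ with $\Re(v)<1$, $\Re(c)>0$, and $\Re(vc+a+b)>0$, $\Re(vc+a-b)>0$, $\Re(vc-a+b)>0$, $\Re(vc-a-b)>0$. Fix a square root $\sqrt{a^2+b^2}$ and put $\lambda_1=\frac v2-\frac{\sqrt{a^2+b^2}}{2c}$, $\lambda_2=\frac v2+\frac{\sqrt{a^2+b^2}}{2c}$, $\sigma_3=\frac v2-\frac{a}{2c}-\frac{b}{2c}$, $\sigma_4=\frac v2-\frac{a}{2c}+\frac{b}{2c}$, $\sigma_5=\frac v2+\frac{a}{2c}+\frac{b}{2c}$, $\sigma_6=\frac v2+\frac{a}{2c}-\frac{b}{2c}$, and $P=(vc-a-b)(vc+a+b)(vc-a+b)(vc+a-b)$. Assume $\frac v2,\lambda_1,\lambda_2\notin\mathbb{Z}_0^-$ and $1+\sigma_j\notin\mathbb{Z}_0^-$ for $j=3,4,5,6$. Then $$ {}_8F_7\!\left(\begin{matrix}v,\ 1+\frac v2,\ 1+\lambda_1,\ 1+\lambda_2,\ \sigma_3,\ \sigma_4,\ \sigma_5,\ \sigma_6\\ \frac v2,\ \lambda_1,\ \lambda_2,\ 1+\sigma_3,\ 1+\sigma_4,\ 1+\sigma_5,\ 1+\sigma_6\end{matrix};\,1\right) =\frac{P}{8\,(v^3c^4-a^2vc^2-b^2vc^2)\,\Gamma(v)}\left[\Gamma(\sigma_5)\Gamma(\sigma_3)\frac{\cos\!\big(\frac{(a+b)\pi}{2c}\big)}{\cos(\frac{v\pi}{2})}+\Gamma(\sigma_6)\Gamma(\sigma_4)\frac{\cos\!\big(\frac{(a-b)\pi}{2c}\big)}{\cos(\frac{v\pi}{2})}\right].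 $$
   Context: $\mathbb{Z}_0^-=\{0,-1,-2,\dots\}$. The Pochhammer symbol is $(\lambda)_0=1$, $(\lambda)_n=\lambda(\lambda+1)\cdots(\lambda+n-1)$ for $n\ge1$. The generalized hypergeometric series is ${}_pF_q\!\left(\begin{matrix}\alpha_1,\dots,\alpha_p\\ \beta_1,\dots,\beta_q\end{matrix};z\right)=\sum_{n=0}^\infty\frac{(\alpha_1)_n\cdots(\alpha_p)_n}{(\beta_1)_n\cdots(\beta_q)_n}\frac{z^n}{n!}$ (with no $\beta_j\in\mathbb{Z}_0^-$); when $p=q+1$ and $z=1$ it converges if $\Re(\sum\beta_j-\sum\alpha_i)>0$. $\Gamma$ is Euler's gamma function. *)

theory Defs
  imports "HOL-Analysis.Analysis"
begin

definition hyp_term :: "complex list \<Rightarrow> complex list \<Rightarrow> complex \<Rightarrow> nat \<Rightarrow> complex" where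
  "hyp_term as bs z n =
     (\<Prod>a\<leftarrow>as. pochhammer a n) / (\<Prod>b\<leftarrow>bs. pochhammer b n) * z ^ n / fact n"

definition hypergeom :: "complex list \<Rightarrow> complex list \<Rightarrow> complex \<Rightarrow> complex" where
  "hypergeom as bs z = (\<Sum>n. hyp_term as bs z n)"

end

theory Submission
  imports Defs
begin

text \<open>
  Put p = (a + b)/(2c), q = (a - b)/(2c) and t = s/(2c), so that the sigma's are v/2 -+ p and
  v/2 -+ q, the lambda's are v/2 -+ t, and 2 t^2 = p^2 + q^2.  All Pochhammer ratios in the
  n-th term are rational in x = v/2 + n, and the partial fraction decomposition of
  x (x - t)(x + t) / ((x - p)(x + p)(x - q)(x + q)), whose numerator is 1/4 of the
  derivative of its denominator, splits the term into a constant times the sum over the four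
  sigma's of (v)_n / (n! (n + sigma)).  Each of these series is Gauss's 2F1(v, sigma; sigma + 1; 1)
  and sums to Gamma(sigma) Gamma(1 - v) / Gamma(sigma + 1 - v).  Gauss's formula is proved from
  the contiguous relation in the lower parameter together with Tannery's theorem when
  Re sigma > 0, and then extended to all admissible sigma by a second contiguous relation.
  Since sigma3 + sigma5 = sigma4 + sigma6 = v, the reflection formula combines the four
  Gamma quotients pairwise into the two cosine terms.
\<close>

section \<open>Decay of the coefficients (v)_n / n!\<close>

lemma norm_pochhammer_Suc_div_fact_le:
  fixes v :: complex
  obtains C where "C > 0"
    "\<And>n. n \<ge> 1 \<Longrightarrow> norm (pochhammer v (Suc n) / fact (Suc n)) \<le> C * real n powr (Re v - 1)"
proof -
  have "Bseq (rGamma_series v)"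
    using rGamma_series_LIMSEQ[of v] by (rule convergent_imp_Bseq[OF convergentI])
  then obtain K where K: "K > 0" "\<And>n. norm (rGamma_series v n) \<le> K" by (auto elim: BseqE)
  have "norm (pochhammer v (Suc n) / fact (Suc n)) \<le> K * real n powr (Re v - 1)" if "n \<ge> 1" for n
  proof -
    have n: "real n > 0" using that by simp
    have "norm (rGamma_series v n) = norm (pochhammer v (Suc n)) / (fact n * real n powr Re v)"
      using n by (simp add: rGamma_series_def norm_divide norm_mult powr_def)
    with K(2)[of n] n have bound: "norm (pochhammer v (Suc n)) \<le> K * (fact n * real n powr Re v)"
      by (simp add: divide_le_eq mult.commute)
    have "norm (pochhammer v (Suc n) / fact (Suc n)) = norm (pochhammer v (Suc n)) / (real (Suc n) * fact n)"
      by (simp add: norm_divide norm_mult del: of_nat_Suc)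
    also have "\<dots> \<le> K * (fact n * real n powr Re v) / (real (Suc n) * fact n)"
      by (intro divide_right_mono bound) auto
    also have "\<dots> = K * real n powr Re v / real (Suc n)" by simp
    also have "\<dots> \<le> K * real n powr Re v / real n"
      using n K by (intro divide_left_mono) auto
    also have "\<dots> = K * real n powr (Re v - 1)"
      using n by (simp add: powr_diff power2_eq_square)
    finally show ?thesis .
  qed
  with that K show ?thesis by blast
qed

lemma pochhammer_div_fact_LIMSEQ_0:
  fixes v :: complex assumes "Re v < 1"
  shows "(\<lambda>n. pochhammer v n / fact n) \<longlonglongrightarrow> 0"
proof -
  obtain C where C: "\<And>n. n \<ge> 1 \<Longrightarrow> norm (pochhammer v (Suc n) / fact (Suc n)) \<le> C * real n powr (Re v - 1)"
    using norm_pochhammer_Suc_div_fact_le[of v] by blast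
  have "eventually (\<lambda>n. norm (pochhammer v (Suc n) / fact (Suc n)) \<le> C * real n powr (Re v - 1)) sequentially"
    using eventually_ge_at_top[of "1::nat"] by eventually_elim (rule C)
  moreover have "(\<lambda>n. C * real n powr (Re v - 1)) \<longlonglongrightarrow> 0"
    using assms by (intro tendsto_mult_right_zero tendsto_neg_powr filterlim_real_sequentially) simp
  ultimately have "(\<lambda>n. pochhammer v (Suc n) / fact (Suc n)) \<longlonglongrightarrow> 0"
    by (rule Lim_null_comparison)
  thus ?thesis by (rule LIMSEQ_imp_Suc)
qed

lemma summable_norm_pochhammer_div_fact_div_Suc:
  fixes v :: complex assumes "Re v < 1"
  shows "summable (\<lambda>n. norm (pochhammer v n / fact n) / real (Suc n))"
proof -
  obtain C where C: "C > 0"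
    "\<And>n. n \<ge> 1 \<Longrightarrow> norm (pochhammer v (Suc n) / fact (Suc n)) \<le> C * real n powr (Re v - 1)"
    using norm_pochhammer_Suc_div_fact_le[of v] by blast
  have bound: "norm (pochhammer v (Suc n) / fact (Suc n)) / real (Suc (Suc n)) \<le> C * real n powr (Re v - 2)"
    if "n \<ge> 1" for n
  proof -
    have n: "real n > 0" using that by simp
    have "norm (pochhammer v (Suc n) / fact (Suc n)) / real (Suc (Suc n))
        \<le> C * real n powr (Re v - 1) / real (Suc (Suc n))"
      by (intro divide_right_mono C(2) that) auto
    also have "\<dots> \<le> C * real n powr (Re v - 1) / real n"
      using n C by (intro divide_left_mono) auto
    also have "\<dots> = C * real n powr (Re v - 2)"
      using n by (simp add: powr_diff power2_eq_square)
    finally show ?thesis .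
  qed
  have "eventually (\<lambda>n. norm (norm (pochhammer v (Suc n) / fact (Suc n)) / real (Suc (Suc n)))
      \<le> C * real n powr (Re v - 2)) sequentially"
    using eventually_ge_at_top[of "1::nat"] by eventually_elim (use bound in simp)
  moreover have "summable (\<lambda>n. C * real n powr (Re v - 2))"
    using assms by (intro summable_mult) (simp add: summable_real_powr_iff)
  ultimately have "summable (\<lambda>n. norm (pochhammer v (Suc n) / fact (Suc n)) / real (Suc (Suc n)))"
    by (rule summable_comparison_test_ev)
  thus ?thesis by (subst summable_Suc_iff[symmetric])
qed

section \<open>Gauss's theorem from the contiguous relation\<close>

lemma Re_pos_not_nonpos_Ints:
  fixes z :: complex assumes "Re z > 0" shows "z \<notin> \<int>\<^sub>\<le>\<^sub>0"
  using assms nonpos_Ints_subset_nonpos_Reals by (auto simp: complex_nonpos_Reals_iff)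

lemma pochhammer_ratio_LIMSEQ:
  fixes x y z w :: complex
  assumes "x + y = z + w" and "z \<notin> \<int>\<^sub>\<le>\<^sub>0" and "w \<notin> \<int>\<^sub>\<le>\<^sub>0"
  shows "(\<lambda>m. pochhammer x m * pochhammer y m / (pochhammer z m * pochhammer w m))
           \<longlonglongrightarrow> Gamma z * Gamma w * rGamma x * rGamma y"
proof -
  define Q where "Q m = pochhammer x m * pochhammer y m / (pochhammer z m * pochhammer w m)" for m
  \<comment> \<open>The powers of m in the four Gamma series cancel because x + y = z + w.\<close>
  have Q_eq: "rGamma_series x m * rGamma_series y m / (rGamma_series z m * rGamma_series w m) = Q (Suc m)"
    for m
  proof -
    define E where "E u = fact m * exp (u * of_real (ln (real m)))" for u :: complex
    have "E x * E y = fact m * fact m * exp ((x + y) * of_real (ln (real m)))"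
      by (simp add: E_def exp_add distrib_right mult_ac)
    also have "\<dots> = E z * E w"
      unfolding assms(1) by (simp add: E_def exp_add distrib_right mult_ac)
    finally have "E z * E w / (E x * E y) = 1" by (simp add: E_def)
    moreover have "rGamma_series x m * rGamma_series y m / (rGamma_series z m * rGamma_series w m)
      = Q (Suc m) * (E z * E w / (E x * E y))"
      unfolding Q_def rGamma_series_def E_def Suc_eq_plus1
      by (simp only: divide_inverse inverse_mult_distrib inverse_inverse_eq mult_ac)
    ultimately show ?thesis by (simp only: mult_1_right)
  qed
  have "(\<lambda>m. rGamma_series x m * rGamma_series y m / (rGamma_series z m * rGamma_series w m))
      \<longlonglongrightarrow> rGamma x * rGamma y / (rGamma z * rGamma w)"
    using assms(2,3) by (intro tendsto_intros) (auto simp: rGamma_eq_zero_iff)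
  moreover have "rGamma x * rGamma y / (rGamma z * rGamma w) = Gamma z * Gamma w * rGamma x * rGamma y"
    by (simp add: rGamma_inverse_Gamma divide_inverse mult_ac)
  ultimately have "(\<lambda>m. Q (Suc m)) \<longlonglongrightarrow> Gamma z * Gamma w * rGamma x * rGamma y"
    by (simp only: Q_eq)
  thus ?thesis unfolding Q_def by (rule LIMSEQ_imp_Suc)
qed

lemma hyp_term_2F1_Suc:
  "hyp_term [a, b] [c] 1 (Suc n)
     = hyp_term [a, b] [c] 1 n * ((a + of_nat n) * (b + of_nat n) / ((c + of_nat n) * of_nat (Suc n)))"
  by (simp only: hyp_term_def pochhammer_Suc fact_Suc prod_list.Cons prod_list.Nil list.map
        power_one of_nat_mult divide_inverse inverse_mult_distrib mult_ac)

lemma hyp_term_2F1_add_one_denominator: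
  assumes "c \<noteq> 0"
  shows "hyp_term [a, b] [c + 1] 1 n = hyp_term [a, b] [c] 1 n * (c / (c + of_nat n))"
proof -
  have "pochhammer c (Suc n) = c * pochhammer (c + 1) n" by (rule pochhammer_rec)
  hence "pochhammer (c + 1) n = pochhammer c n * (c + of_nat n) / c"
    using assms by (simp add: pochhammer_Suc)
  thus ?thesis
    by (simp only: hyp_term_def prod_list.Cons prod_list.Nil list.map
        divide_inverse inverse_mult_distrib inverse_inverse_eq mult_ac)
qed

lemma gauss_contiguous_telescoping:
  fixes a b c :: complex
  defines "t \<equiv> \<lambda>c n. hyp_term [a, b] [c] 1 n"
  assumes "c \<noteq> 0" and "c + of_nat n \<noteq> 0"
  shows "c * (c - a - b) * t c n - (c - a) * (c - b) * t (c + 1) n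
       = c * of_nat n * t c n - c * of_nat (Suc n) * t c (Suc n)"
proof -
  define X N where "X = t c n" and "N = (of_nat n :: complex)"
  have N1: "of_nat (Suc n) = N + 1" and cN: "c + N \<noteq> 0" "(c + N) * (N + 1) \<noteq> 0"
    using assms(3) of_nat_neq_0[of n] by (simp_all add: N_def add.commute)
  have "c * (c - a - b) * X - (c - a) * (c - b) * (X * (c / (c + N)))
      = (c * (c - a - b) * (c + N) - (c - a) * (c - b) * c) * X / (c + N)"
    using cN by (simp add: field_simps)
  also have "c * (c - a - b) * (c + N) - (c - a) * (c - b) * c = c * N * (c + N) - c * (a + N) * (b + N)"
    by (simp add: algebra_simps)
  also have "(c * N * (c + N) - c * (a + N) * (b + N)) * X / (c + N)
      = c * N * X - c * (N + 1) * (X * ((a + N) * (b + N) / ((c + N) * (N + 1))))"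
    using cN by (simp add: field_simps)
  finally show ?thesis
    unfolding t_def hyp_term_2F1_add_one_denominator[OF assms(2)] hyp_term_2F1_Suc N1
    by (simp add: X_def N_def t_def)
qed

lemma gauss_contiguous_relation:
  fixes a b c :: complex
  defines "t \<equiv> \<lambda>c n. hyp_term [a, b] [c] 1 n"
  assumes c: "c \<notin> \<int>\<^sub>\<le>\<^sub>0"
    and summable: "summable (t c)" "summable (t (c + 1))"
    and lim: "(\<lambda>n. of_nat n * t c n) \<longlonglongrightarrow> 0"
  shows "c * (c - a - b) * hypergeom [a, b] [c] 1 = (c - a) * (c - b) * hypergeom [a, b] [c + 1] 1"
proof -
  define U where "U n = c * of_nat n * t c n" for n
  have "U \<longlonglongrightarrow> c * 0"
    unfolding U_def mult.assoc by (intro tendsto_mult_left lim)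
  hence "(\<lambda>n. U n - U (Suc n)) sums (U 0 - 0)" by (intro telescope_sums') simp
  moreover have "U n - U (Suc n) = c * (c - a - b) * t c n - (c - a) * (c - b) * t (c + 1) n" for n
    unfolding U_def t_def
    using c plus_of_nat_eq_0_imp[of c n] by (intro gauss_contiguous_telescoping[symmetric]) auto
  ultimately have "(\<lambda>n. c * (c - a - b) * t c n - (c - a) * (c - b) * t (c + 1) n) sums 0"
    by (simp add: U_def)
  moreover have "(\<lambda>n. c * (c - a - b) * t c n - (c - a) * (c - b) * t (c + 1) n)
      sums (c * (c - a - b) * suminf (t c) - (c - a) * (c - b) * suminf (t (c + 1)))"
    using summable by (intro sums_diff sums_mult summable_sums)
  ultimately show ?thesis
    unfolding hypergeom_def t_def by (simp add: sums_iff)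
qed

lemma gauss_summation_of_contiguous:
  fixes a b c :: complex and F :: "nat \<Rightarrow> complex"
  assumes contig: "\<And>m. (c + of_nat m) * (c - a - b + of_nat m) * F m
                     = (c - a + of_nat m) * (c - b + of_nat m) * F (Suc m)"
    and c: "c \<notin> \<int>\<^sub>\<le>\<^sub>0" and cab: "c - a - b \<notin> \<int>\<^sub>\<le>\<^sub>0"
    and lim: "F \<longlonglongrightarrow> 1"
  shows "F 0 = Gamma c * Gamma (c - a - b) * rGamma (c - a) * rGamma (c - b)"
proof -
  \<comment> \<open>Iterating the relation m times leaves a Pochhammer quotient, whose limit is the Gamma quotient.\<close>
  define R where "R m = pochhammer (c - a) m * pochhammer (c - b) m
                        / (pochhammer c m * pochhammer (c - a - b) m)" for m
  have F0: "F 0 = R m * F m" for m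
  proof (induction m)
    case 0
    show ?case by (simp add: R_def)
  next
    case (Suc m)
    define X Y where "X = (c - a + of_nat m) * (c - b + of_nat m)"
      and "Y = (c + of_nat m) * (c - a - b + of_nat m)"
    have "Y \<noteq> 0"
      using c cab plus_of_nat_eq_0_imp unfolding Y_def by (metis mult_eq_0_iff)
    hence "F m = Y * F m / Y" by simp
    also have "\<dots> = X / Y * F (Suc m)"
      using contig[of m] unfolding X_def Y_def by simp
    finally have "F m = X / Y * F (Suc m)" .
    moreover have "R (Suc m) = R m * (X / Y)"
      unfolding R_def X_def Y_def
      by (simp only: pochhammer_Suc divide_inverse inverse_mult_distrib mult_ac)
    ultimately show ?case
      using Suc.IH by (simp only: mult.assoc)
  qed
  have "(\<lambda>m. R m * F m) \<longlonglongrightarrow> Gamma c * Gamma (c - a - b) * rGamma (c - a) * rGamma (c - b) * 1"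
    unfolding R_def using c cab by (intro tendsto_mult lim pochhammer_ratio_LIMSEQ) auto
  hence "(\<lambda>m. F 0) \<longlonglongrightarrow> Gamma c * Gamma (c - a - b) * rGamma (c - a) * rGamma (c - b)"
    by (simp flip: F0)
  thus ?thesis by (simp add: LIMSEQ_const_iff)
qed

section \<open>The series of (v)_n / (n! (n + s))\<close>

lemma hyp_term_2F1_eq:
  "hyp_term [a, b] [c] 1 n = pochhammer a n / fact n * (pochhammer b n / pochhammer c n)"
  by (simp add: hyp_term_def)

lemma norm_le_norm_add_of_nat:
  fixes w :: complex assumes "Re w \<ge> 0"
  shows "norm w \<le> norm (w + of_nat m)"
proof -
  have "(Re w)\<^sup>2 \<le> (Re w + real m)\<^sup>2"
    using assms by (intro power_mono) auto
  hence "(norm w)\<^sup>2 \<le> (norm (w + of_nat m))\<^sup>2" by (simp add: cmod_power2)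
  thus ?thesis by (rule power2_le_imp_le) simp
qed

lemma norm_pochhammer_ratio_le:
  fixes s :: complex assumes "Re s > 0"
  shows "norm (pochhammer s (Suc n) / pochhammer (s + 1 + of_nat m) (Suc n))
           \<le> norm s / norm (s + of_nat (Suc n) + of_nat m)"
proof (induction n)
  case 0
  show ?case by (simp add: norm_divide add_ac)
next
  case (Suc n)
  define d where "d = s + 1 + of_nat m"
  define e where "e = s + of_nat (Suc n)"
  have "0 < Re (e + of_nat m)" using assms by (simp add: e_def)
  hence e_pos: "norm (e + of_nat m) > 0" using complex_Re_le_cmod[of "e + of_nat m"] by linarith
  have "d + of_nat (Suc n) = e + 1 + of_nat m" by (simp add: d_def e_def algebra_simps)
  hence "norm (pochhammer s (Suc (Suc n)) / pochhammer d (Suc (Suc n)))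
      = norm (pochhammer s (Suc n) / pochhammer d (Suc n)) * (norm e / norm (e + 1 + of_nat m))"
    unfolding pochhammer_Suc[of _ "Suc n"] e_def[symmetric] by (simp only: norm_mult norm_divide) simp
  also have "\<dots> \<le> norm s / norm (e + of_nat m) * (norm (e + of_nat m) / norm (e + 1 + of_nat m))"
    using Suc.IH assms unfolding d_def e_def
    by (intro mult_mono divide_right_mono norm_le_norm_add_of_nat) simp_all
  also have "\<dots> = norm s / norm (e + 1 + of_nat m)" using e_pos by simp
  finally show ?case by (simp add: d_def e_def add_ac)
qed

lemma norm_hyp_term_gauss_Suc_le:
  fixes v s :: complex assumes "Re s > 0"
  shows "norm (hyp_term [v, s] [s + 1 + of_nat m] 1 (Suc k))
           \<le> norm (pochhammer v (Suc k) / fact (Suc k)) * (norm s / (Re s + real (Suc k) + real m))"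
proof -
  have "norm (hyp_term [v, s] [s + 1 + of_nat m] 1 (Suc k))
      \<le> norm (pochhammer v (Suc k) / fact (Suc k)) * (norm s / norm (s + of_nat (Suc k) + of_nat m))"
    unfolding hyp_term_2F1_eq norm_mult
    by (intro mult_left_mono norm_pochhammer_ratio_le assms) simp
  also have "\<dots> \<le> norm (pochhammer v (Suc k) / fact (Suc k)) * (norm s / (Re s + real (Suc k) + real m))"
  proof -
    have "0 < Re s + real (Suc k) + real m" using assms by simp
    moreover have "Re s + real (Suc k) + real m \<le> norm (s + of_nat (Suc k) + of_nat m)"
      using complex_Re_le_cmod[of "s + of_nat (Suc k) + of_nat m"] by simp
    ultimately show ?thesis by (intro mult_left_mono divide_left_mono mult_pos_pos) auto
  qed
  finally show ?thesis .
qed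

lemma norm_hyp_term_gauss_le:
  fixes v s :: complex assumes "Re s > 0"
  shows "norm (hyp_term [v, s] [s + 1 + of_nat m] 1 n)
           \<le> norm (pochhammer v n / fact n) * (norm s / min 1 (Re s)) / real (Suc n)"
proof (cases n)
  case 0
  have "min 1 (Re s) \<le> norm s" using complex_Re_le_cmod[of s] by linarith
  with assms have "1 \<le> norm s / min 1 (Re s)" by simp
  thus ?thesis using 0 by (simp add: hyp_term_def)
next
  case (Suc k)
  have "min 1 (Re s) * real (Suc n) \<le> Re s + real n"
    using assms by (cases "Re s \<le> 1") (auto simp: algebra_simps intro: mult_left_le_one_le)
  hence "norm s / (Re s + real n + real m) \<le> norm s / (min 1 (Re s) * real (Suc n))"
    using assms by (intro divide_left_mono) auto
  hence "norm (pochhammer v n / fact n) * (norm s / (Re s + real n + real m))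
      \<le> norm (pochhammer v n / fact n) * (norm s / (min 1 (Re s) * real (Suc n)))"
    by (rule mult_left_mono) simp
  also have "\<dots> = norm (pochhammer v n / fact n) * (norm s / min 1 (Re s)) / real (Suc n)"
    by simp
  finally show ?thesis
    using norm_hyp_term_gauss_Suc_le[OF assms, of v m k] Suc by simp
qed

lemma summable_gauss_majorant:
  fixes v s :: complex assumes "Re v < 1"
  shows "summable (\<lambda>n. norm (pochhammer v n / fact n) * (norm s / min 1 (Re s)) / real (Suc n))"
  using summable_mult2[OF summable_norm_pochhammer_div_fact_div_Suc[OF assms], of "norm s / min 1 (Re s)"]
  by (simp add: mult_ac)

lemma summable_hyp_term_gauss:
  fixes v s :: complex assumes "Re v < 1" and "Re s > 0"
  shows "summable (hyp_term [v, s] [s + 1 + of_nat m] 1)"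
  by (rule summable_comparison_test'[OF summable_gauss_majorant[OF assms(1)] norm_hyp_term_gauss_le[OF assms(2)]])

lemma hyp_term_gauss_times_index_LIMSEQ_0:
  fixes v s :: complex assumes "Re v < 1" and "Re s > 0"
  shows "(\<lambda>n. of_nat n * hyp_term [v, s] [s + 1 + of_nat m] 1 n) \<longlonglongrightarrow> 0"
proof (rule Lim_null_comparison)
  have "norm (of_nat n * hyp_term [v, s] [s + 1 + of_nat m] 1 n) \<le> norm s * norm (pochhammer v n / fact n)"
    for n
  proof (cases n)
    case (Suc k)
    have "real n \<le> Re s + real n + real m" using assms(2) by simp
    hence "real n * (norm s / (Re s + real n + real m)) \<le> norm s"
      using assms(2) by (simp add: field_simps mult_left_mono)
    hence "norm (pochhammer v n / fact n) * (real n * (norm s / (Re s + real n + real m)))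
        \<le> norm (pochhammer v n / fact n) * norm s"
      by (rule mult_left_mono) simp
    hence "real n * (norm (pochhammer v n / fact n) * (norm s / (Re s + real n + real m)))
        \<le> norm s * norm (pochhammer v n / fact n)"
      by (simp only: mult_ac)
    moreover have "real n * norm (hyp_term [v, s] [s + 1 + of_nat m] 1 n)
        \<le> real n * (norm (pochhammer v n / fact n) * (norm s / (Re s + real n + real m)))"
      using norm_hyp_term_gauss_Suc_le[OF assms(2), of v m k] Suc by (intro mult_left_mono) simp_all
    ultimately show ?thesis by (simp add: norm_mult)
  qed simp
  thus "eventually (\<lambda>n. norm (of_nat n * hyp_term [v, s] [s + 1 + of_nat m] 1 n)
          \<le> norm s * norm (pochhammer v n / fact n)) sequentially"
    by simp
  show "(\<lambda>n. norm s * norm (pochhammer v n / fact n)) \<longlonglongrightarrow> 0"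
    using pochhammer_div_fact_LIMSEQ_0[OF assms(1)]
    by (intro tendsto_mult_right_zero) (simp add: tendsto_norm_zero)
qed

lemma hyp_term_gauss_LIMSEQ:
  fixes v s :: complex assumes "Re s > 0"
  shows "(\<lambda>m. hyp_term [v, s] [s + 1 + of_nat m] 1 n) \<longlonglongrightarrow> (if n = 0 then 1 else 0)"
proof (cases n)
  case 0
  thus ?thesis by (simp add: hyp_term_def)
next
  case (Suc k)
  define C where "C = norm (pochhammer v n / fact n) * norm s"
  have bound: "norm (hyp_term [v, s] [s + 1 + of_nat m] 1 n) \<le> C * inverse (real (Suc m))" for m
  proof -
    have "norm s / (Re s + real n + real m) \<le> norm s / real (Suc m)"
      using assms Suc by (intro divide_left_mono mult_pos_pos) auto
    hence "norm (pochhammer v n / fact n) * (norm s / (Re s + real n + real m))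
        \<le> C * inverse (real (Suc m))"
      unfolding C_def divide_inverse mult.assoc by (rule mult_left_mono) simp
    with norm_hyp_term_gauss_Suc_le[OF assms, of v m k] show ?thesis
      unfolding Suc by (rule order_trans)
  qed
  hence "eventually (\<lambda>m. norm (hyp_term [v, s] [s + 1 + of_nat m] 1 n) \<le> C * inverse (real (Suc m)))
      sequentially" by (intro always_eventually allI)
  moreover have "(\<lambda>m. C * inverse (real (Suc m))) \<longlonglongrightarrow> 0"
    by (intro tendsto_mult_right_zero LIMSEQ_inverse_real_of_nat)
  ultimately have "(\<lambda>m. hyp_term [v, s] [s + 1 + of_nat m] 1 n) \<longlonglongrightarrow> 0"
    by (rule Lim_null_comparison)
  thus ?thesis using Suc by simp
qed

lemma hypergeom_gauss_LIMSEQ_1: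
  fixes v s :: complex assumes "Re v < 1" and "Re s > 0"
  shows "(\<lambda>m. hypergeom [v, s] [s + 1 + of_nat m] 1) \<longlonglongrightarrow> 1"
proof -
  define \<delta> where "\<delta> n = (if n = 0 then 1 else 0 :: complex)" for n :: nat
  have "suminf \<delta> = 1"
    using sums_single[of 0 "\<lambda>_. 1 :: complex"] by (simp add: \<delta>_def[abs_def] sums_iff)
  moreover have "(\<lambda>m. suminf (\<lambda>n. hyp_term [v, s] [s + 1 + of_nat m] 1 n)) \<longlonglongrightarrow> suminf \<delta>"
  proof (rule tannerys_theorem[THEN conjunct2, THEN conjunct2])
    show "(\<lambda>m. hyp_term [v, s] [s + 1 + of_nat m] 1 n) \<longlonglongrightarrow> \<delta> n" for n
      unfolding \<delta>_def by (rule hyp_term_gauss_LIMSEQ[OF assms(2)])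
    show "eventually (\<lambda>(n, m). norm (hyp_term [v, s] [s + 1 + of_nat m] 1 n)
        \<le> norm (pochhammer v n / fact n) * (norm s / min 1 (Re s)) / real (Suc n)) (at_top \<times>\<^sub>F sequentially)"
      by (intro always_eventually)
        (simp only: split_paired_All prod.case norm_hyp_term_gauss_le[OF assms(2)] simp_thms)
  qed (use summable_gauss_majorant[OF assms(1), of s] in auto)
  ultimately show ?thesis by (simp add: hypergeom_def)
qed

lemma hyp_term_2F1_add_one_same:
  fixes v s :: complex assumes "s \<notin> \<int>\<^sub>\<le>\<^sub>0"
  shows "hyp_term [v, s] [s + 1] 1 n = s * (pochhammer v n / fact n / (of_nat n + s))"
proof -
  have "pochhammer s n \<noteq> 0" using assms pochhammer_eq_0_imp_nonpos_Int by blast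
  hence "hyp_term [v, s] [s] 1 n = pochhammer v n / fact n" by (simp add: hyp_term_2F1_eq)
  moreover have "s \<noteq> 0" using assms by auto
  ultimately show ?thesis
    unfolding hyp_term_2F1_add_one_denominator[OF \<open>s \<noteq> 0\<close>] by (simp add: add.commute)
qed

lemma gauss_sum_Re_pos:
  fixes v s :: complex assumes v: "Re v < 1" and s: "Re s > 0"
  shows "(\<lambda>n. pochhammer v n / fact n / (of_nat n + s)) sums (Gamma s * Gamma (1 - v) * rGamma (s + 1 - v))"
proof -
  define F where "F m = hypergeom [v, s] [s + 1 + of_nat m] 1" for m
  have "(s + 1 + of_nat m) * (s + 1 - v - s + of_nat m) * F m
      = (s + 1 - v + of_nat m) * (s + 1 - s + of_nat m) * F (Suc m)" for m
  proof -
    have c: "s + 1 + of_nat m \<notin> \<int>\<^sub>\<le>\<^sub>0" using s by (intro Re_pos_not_nonpos_Ints) simp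
    have c1: "s + 1 + of_nat m + 1 = s + 1 + of_nat (Suc m)" by simp
    have "(s + 1 + of_nat m) * (s + 1 + of_nat m - v - s) * F m
        = (s + 1 + of_nat m - v) * (s + 1 + of_nat m - s) * F (Suc m)"
      unfolding F_def c1[symmetric]
    proof (rule gauss_contiguous_relation[OF c])
      show "summable (hyp_term [v, s] [s + 1 + of_nat m + 1] 1)"
        unfolding c1 by (rule summable_hyp_term_gauss[OF v s])
    qed (rule summable_hyp_term_gauss[OF v s] hyp_term_gauss_times_index_LIMSEQ_0[OF v s])+
    thus ?thesis by (simp add: algebra_simps)
  qed
  moreover have "s + 1 \<notin> \<int>\<^sub>\<le>\<^sub>0" "s + 1 - v - s \<notin> \<int>\<^sub>\<le>\<^sub>0"
    using s v by (auto intro!: Re_pos_not_nonpos_Ints)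
  moreover have "F \<longlonglongrightarrow> 1" unfolding F_def by (rule hypergeom_gauss_LIMSEQ_1[OF v s])
  ultimately have "F 0 = Gamma (s + 1) * Gamma (s + 1 - v - s) * rGamma (s + 1 - v) * rGamma (s + 1 - s)"
    by (rule gauss_summation_of_contiguous)
  also have "\<dots> = s * (Gamma s * Gamma (1 - v) * rGamma (s + 1 - v))"
    using Gamma_plus1[OF Re_pos_not_nonpos_Ints[OF s]] by simp
  finally have "hypergeom [v, s] [s + 1] 1 = s * (Gamma s * Gamma (1 - v) * rGamma (s + 1 - v))"
    by (simp add: F_def)
  moreover have "summable (hyp_term [v, s] [s + 1] 1)"
    using summable_hyp_term_gauss[OF v s, of 0] by simp
  ultimately have "(\<lambda>n. s * (pochhammer v n / fact n / (of_nat n + s)))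
      sums (s * (Gamma s * Gamma (1 - v) * rGamma (s + 1 - v)))"
    unfolding hyp_term_2F1_add_one_same[OF Re_pos_not_nonpos_Ints[OF s], symmetric] hypergeom_def
    by (simp add: sums_iff)
  moreover have "s \<noteq> 0" using s by auto
  ultimately show ?thesis using sums_mult_iff by blast
qed

lemma of_nat_div_of_nat_add_LIMSEQ_1:
  fixes s :: complex
  shows "(\<lambda>n. of_nat n / (of_nat n + s)) \<longlonglongrightarrow> 1"
proof -
  have "(\<lambda>n. 1 / (1 + s * inverse (of_nat n))) \<longlonglongrightarrow> 1 / (1 + s * 0)"
    by (intro tendsto_intros lim_inverse_n) simp
  moreover have "eventually (\<lambda>n. 1 / (1 + s * inverse (of_nat n)) = of_nat n / (of_nat n + s)) sequentially"
    using eventually_gt_at_top[of "0::nat"] by eventually_elim (simp add: field_simps)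
  ultimately show ?thesis by (simp add: Lim_transform_eventually)
qed

lemma gauss_shift_telescoping:
  fixes v s :: complex
  defines "u \<equiv> \<lambda>n. - (pochhammer v n / fact n * of_nat n / (of_nat n + s))"
  assumes s: "s \<notin> \<int>\<^sub>\<le>\<^sub>0"
  shows "(u n - u (Suc n)) + (s + 1 - v) * (pochhammer v n / fact n / (of_nat n + (s + 1)))
       = s * (pochhammer v n / fact n / (of_nat n + s))"
proof -
  define N c where "N = (of_nat n :: complex)" and "c = pochhammer v n / fact n"
  have "pochhammer v (Suc n) / fact (Suc n) * of_nat (Suc n) = c * (v + N)"
    unfolding c_def N_def by (simp add: pochhammer_Suc field_simps del: of_nat_Suc)
  hence u_Suc: "u (Suc n) = - (c * (v + N) / (N + s + 1))"
    unfolding u_def by (simp only:) (simp add: N_def add_ac)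
  have u: "u n = - (c * N / (N + s))" by (simp add: u_def N_def c_def)
  have P: "N + s \<noteq> 0" and P1: "N + s + 1 \<noteq> 0"
    using s plus_of_nat_eq_0_imp[of s n] plus_of_nat_eq_0_imp[of s "Suc n"]
    by (auto simp: N_def add_ac)
  have "c * (v + N) / (N + s + 1) + (s + 1 - v) * (c / (N + s + 1)) = c * (N + s + 1) / (N + s + 1)"
    by (simp add: add_divide_distrib[symmetric] algebra_simps)
  also have "\<dots> = c" using P1 by simp
  finally have "c * (v + N) / (N + s + 1) + (s + 1 - v) * (c / (N + s + 1)) = c" .
  moreover have "c * N / (N + s) = c - s * (c / (N + s))"
    using P by (simp add: field_simps)
  ultimately show ?thesis
    unfolding u u_Suc c_def[symmetric] N_def[symmetric] add.assoc[of N s 1, symmetric]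
    by (simp add: algebra_simps)
qed

lemma gauss_sum_shift:
  fixes v s :: complex
  assumes v: "Re v < 1" and s: "s \<notin> \<int>\<^sub>\<le>\<^sub>0"
    and sum1: "(\<lambda>n. pochhammer v n / fact n / (of_nat n + (s + 1)))
                 sums (Gamma (s + 1) * Gamma (1 - v) * rGamma (s + 1 + 1 - v))"
  shows "(\<lambda>n. pochhammer v n / fact n / (of_nat n + s)) sums (Gamma s * Gamma (1 - v) * rGamma (s + 1 - v))"
proof -
  define u where "u n = - (pochhammer v n / fact n * of_nat n / (of_nat n + s))" for n
  have "(\<lambda>n. - (pochhammer v n / fact n * (of_nat n / (of_nat n + s)))) \<longlonglongrightarrow> - (0 * 1)"
    by (intro tendsto_intros pochhammer_div_fact_LIMSEQ_0 v of_nat_div_of_nat_add_LIMSEQ_1)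
  hence "u \<longlonglongrightarrow> 0" by (simp add: u_def[abs_def])
  hence "(\<lambda>n. u n - u (Suc n)) sums (u 0 - 0)" by (rule telescope_sums')
  hence "(\<lambda>n. (u n - u (Suc n)) + (s + 1 - v) * (pochhammer v n / fact n / (of_nat n + (s + 1))))
      sums (0 + (s + 1 - v) * (Gamma (s + 1) * Gamma (1 - v) * rGamma (s + 1 + 1 - v)))"
    by (intro sums_add sums_mult sum1) (simp add: u_def)
  moreover have "(s + 1 - v) * (Gamma (s + 1) * Gamma (1 - v) * rGamma (s + 1 + 1 - v))
      = s * (Gamma s * Gamma (1 - v) * rGamma (s + 1 - v))"
    using rGamma_plus1[of "s + 1 - v"] Gamma_plus1[OF s] by (simp add: diff_add_eq add_ac mult_ac)
  ultimately have "(\<lambda>n. s * (pochhammer v n / fact n / (of_nat n + s)))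
      sums (s * (Gamma s * Gamma (1 - v) * rGamma (s + 1 - v)))"
    unfolding u_def gauss_shift_telescoping[OF s] by (simp only: add_0_left)
  moreover have "s \<noteq> 0" using s by auto
  ultimately show ?thesis using sums_mult_iff by blast
qed

lemma gauss_sum:
  fixes v s :: complex assumes v: "Re v < 1" and s: "s \<notin> \<int>\<^sub>\<le>\<^sub>0"
  shows "(\<lambda>n. pochhammer v n / fact n / (of_nat n + s)) sums (Gamma s * Gamma (1 - v) * rGamma (s + 1 - v))"
proof -
  obtain k :: nat where "- Re s < real k" using reals_Archimedean2 by blast
  hence "Re s + real k > 0" by linarith
  moreover have "Re s + real k > 0 \<Longrightarrow> s \<notin> \<int>\<^sub>\<le>\<^sub>0 \<Longrightarrow>
      (\<lambda>n. pochhammer v n / fact n / (of_nat n + s)) sums (Gamma s * Gamma (1 - v) * rGamma (s + 1 - v))" for s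
  proof (induction k arbitrary: s)
    case 0
    hence "Re s > 0" by simp
    thus ?case by (rule gauss_sum_Re_pos[OF v])
  next
    case (Suc k)
    have "Re (s + 1) + real k > 0" using Suc.prems(1) by simp
    moreover have "s + 1 \<notin> \<int>\<^sub>\<le>\<^sub>0"
      using Suc.prems(2) plus_one_in_nonpos_Ints_imp by blast
    ultimately have "(\<lambda>n. pochhammer v n / fact n / (of_nat n + (s + 1)))
        sums (Gamma (s + 1) * Gamma (1 - v) * rGamma (s + 1 + 1 - v))"
      by (rule Suc.IH)
    thus ?case by (rule gauss_sum_shift[OF v Suc.prems(2)])
  qed
  ultimately show ?thesis using s by simp
qed

section \<open>The well-poised 8F7\<close>

lemma not_nonpos_Ints_if_one_plus:
  fixes z :: complex assumes "1 + z \<notin> \<int>\<^sub>\<le>\<^sub>0" and "z \<noteq> 0"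
  shows "z \<notin> \<int>\<^sub>\<le>\<^sub>0"
proof
  assume "z \<in> \<int>\<^sub>\<le>\<^sub>0"
  then obtain k where "z = - of_nat k" by (elim nonpos_Ints_cases')
  with assms(2) have "1 + z = - of_nat (k - 1)" by (cases k) auto
  with assms(1) show False by simp
qed

lemma pochhammer_one_plus_div:
  fixes x :: complex assumes "x \<notin> \<int>\<^sub>\<le>\<^sub>0"
  shows "pochhammer (1 + x) n / pochhammer x n = (x + of_nat n) / x"
proof -
  have "pochhammer x n * (x + of_nat n) = x * pochhammer (1 + x) n"
    by (metis pochhammer_Suc pochhammer_rec add.commute)
  moreover have "pochhammer x n \<noteq> 0" "x \<noteq> 0"
    using assms pochhammer_eq_0_imp_nonpos_Int by auto
  ultimately show ?thesis by (simp add: field_simps)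
qed

lemma pochhammer_div_one_plus:
  fixes x :: complex assumes "x \<notin> \<int>\<^sub>\<le>\<^sub>0"
  shows "pochhammer x n / pochhammer (1 + x) n = x / (x + of_nat n)"
proof -
  have "1 + x \<notin> \<int>\<^sub>\<le>\<^sub>0" using assms plus_one_in_nonpos_Ints_imp[of x] by (auto simp: add.commute)
  hence "pochhammer (1 + x) n / pochhammer x n \<noteq> 0"
    using pochhammer_eq_0_imp_nonpos_Int assms by fastforce
  with pochhammer_one_plus_div[OF assms, of n] show ?thesis
    by (metis inverse_divide)
qed

lemma well_poised_partial_fractions:
  fixes x p q t :: complex
  assumes t: "2 * t\<^sup>2 = p\<^sup>2 + q\<^sup>2"
    and "x - p \<noteq> 0" "x + p \<noteq> 0" "x - q \<noteq> 0" "x + q \<noteq> 0"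
  shows "x * (x - t) * (x + t) / ((x - p) * (x + p) * (x - q) * (x + q))
       = (1 / (x - p) + 1 / (x + p) + 1 / (x - q) + 1 / (x + q)) / 4"
proof -
  define A B C D where "A = x - p" and "B = x + p" and "C = x - q" and "D = x + q"
  have nz: "A \<noteq> 0" "B \<noteq> 0" "C \<noteq> 0" "D \<noteq> 0"
    using assms(2-) by (simp_all add: A_def B_def C_def D_def)
  have "4 * (x * (x - t) * (x + t)) = 4 * x ^ 3 - 2 * x * (p\<^sup>2 + q\<^sup>2)"
    unfolding t[symmetric] by (simp add: algebra_simps power2_eq_square power3_eq_cube)
  also have "\<dots> = B * C * D + A * C * D + A * B * D + A * B * C"
    by (simp add: A_def B_def C_def D_def algebra_simps power2_eq_square power3_eq_cube)
  also have "\<dots> = (1 / A + 1 / B + 1 / C + 1 / D) * (A * B * C * D)"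
    using nz by (simp add: field_simps)
  finally show ?thesis
    unfolding A_def[symmetric] B_def[symmetric] C_def[symmetric] D_def[symmetric]
    using nz by (simp add: field_simps)
qed

lemma hyp_term_well_poised_8F7:
  fixes v p q t :: complex
  assumes t: "2 * t\<^sup>2 = p\<^sup>2 + q\<^sup>2" and w: "v / 2 \<notin> \<int>\<^sub>\<le>\<^sub>0"
    and l: "v / 2 - t \<notin> \<int>\<^sub>\<le>\<^sub>0" "v / 2 + t \<notin> \<int>\<^sub>\<le>\<^sub>0"
    and g: "v / 2 - p \<notin> \<int>\<^sub>\<le>\<^sub>0" "v / 2 - q \<notin> \<int>\<^sub>\<le>\<^sub>0"
           "v / 2 + p \<notin> \<int>\<^sub>\<le>\<^sub>0" "v / 2 + q \<notin> \<int>\<^sub>\<le>\<^sub>0"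
  defines "K \<equiv> (v/2 - p) * (v/2 - q) * (v/2 + p) * (v/2 + q) / (2 * v * (v/2 - t) * (v/2 + t))"
  shows "hyp_term [v, 1 + v/2, 1 + (v/2 - t), 1 + (v/2 + t), v/2 - p, v/2 - q, v/2 + p, v/2 + q]
            [v/2, v/2 - t, v/2 + t, 1 + (v/2 - p), 1 + (v/2 - q), 1 + (v/2 + p), 1 + (v/2 + q)] 1 n
       = K * (pochhammer v n / fact n / (of_nat n + (v/2 - p)) + pochhammer v n / fact n / (of_nat n + (v/2 - q))
            + pochhammer v n / fact n / (of_nat n + (v/2 + p)) + pochhammer v n / fact n / (of_nat n + (v/2 + q)))"
proof -
  define w x c where "w = v / 2" and "x = v / 2 + of_nat n" and "c = pochhammer v n / fact n"
  have shift: "w + of_nat n = x" "w - t + of_nat n = x - t" "w + t + of_nat n = x + t"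
    "w - p + of_nat n = x - p" "w - q + of_nat n = x - q" "w + p + of_nat n = x + p" "w + q + of_nat n = x + q"
    "of_nat n + (w - p) = x - p" "of_nat n + (w - q) = x - q" "of_nat n + (w + p) = x + p" "of_nat n + (w + q) = x + q"
    by (simp_all add: w_def x_def algebra_simps)
  have nz: "x - p \<noteq> 0" "x - q \<noteq> 0" "x + p \<noteq> 0" "x + q \<noteq> 0" "w \<noteq> 0"
    using g w plus_of_nat_eq_0_imp unfolding shift(4-7)[symmetric] w_def by auto
  have "hyp_term [v, 1 + w, 1 + (w - t), 1 + (w + t), w - p, w - q, w + p, w + q]
            [w, w - t, w + t, 1 + (w - p), 1 + (w - q), 1 + (w + p), 1 + (w + q)] 1 n
      = c * (pochhammer (1 + w) n / pochhammer w n) * (pochhammer (1 + (w - t)) n / pochhammer (w - t) n)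
          * (pochhammer (1 + (w + t)) n / pochhammer (w + t) n)
          * (pochhammer (w - p) n / pochhammer (1 + (w - p)) n) * (pochhammer (w - q) n / pochhammer (1 + (w - q)) n)
          * (pochhammer (w + p) n / pochhammer (1 + (w + p)) n) * (pochhammer (w + q) n / pochhammer (1 + (w + q)) n)"
    by (simp only: hyp_term_def c_def prod_list.Cons prod_list.Nil list.map power_one mult_1_right mult_1_left inverse_1
          divide_inverse inverse_mult_distrib mult_ac)
  also have "\<dots> = c * (x / w) * ((x - t) / (w - t)) * ((x + t) / (w + t))
          * ((w - p) / (x - p)) * ((w - q) / (x - q)) * ((w + p) / (x + p)) * ((w + q) / (x + q))"
    using w l g unfolding w_def[symmetric]
    by (simp only: pochhammer_one_plus_div pochhammer_div_one_plus shift(1-7) not_False_eq_True)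
  also have "\<dots> = c * ((w - p) * (w - q) * (w + p) * (w + q) / (w * (w - t) * (w + t)))
          * (x * (x - t) * (x + t) / ((x - p) * (x + p) * (x - q) * (x + q)))"
    by (simp only: divide_inverse inverse_mult_distrib mult_ac)
  also have "\<dots> = c * ((w - p) * (w - q) * (w + p) * (w + q) / (w * (w - t) * (w + t)))
          * ((1 / (x - p) + 1 / (x + p) + 1 / (x - q) + 1 / (x + q)) / 4)"
    by (simp only: well_poised_partial_fractions[OF t nz(1,3,2,4)])
  also have "\<dots> = K * (c * (1 / (x - p) + 1 / (x + p) + 1 / (x - q) + 1 / (x + q)))"
  proof -
    have "c * (G / (v / 2 * L1 * L2)) * (S / 4) = G / (2 * v * L1 * L2) * (c * S)"
      if "L1 \<noteq> 0" "L2 \<noteq> 0" for G L1 L2 S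
      using that nz(5) by (simp add: w_def field_simps)
    moreover have "w - t \<noteq> 0" "w + t \<noteq> 0" using l unfolding w_def by auto
    ultimately show ?thesis unfolding K_def w_def by blast
  qed
  also have "\<dots> = K * (c / (x - p) + c / (x - q) + c / (x + p) + c / (x + q))"
    by (simp add: distrib_left add_ac)
  finally show ?thesis
    unfolding w_def[symmetric] shift(8-11) c_def by simp
qed

lemma rGamma_one_minus:
  fixes y :: complex assumes "y \<notin> \<int>\<^sub>\<le>\<^sub>0"
  shows "rGamma (1 - y) = Gamma y * sin (of_real pi * y) / of_real pi"
proof -
  have "rGamma y * rGamma (1 - y) = sin (of_real pi * y) / of_real pi"
    by (rule rGamma_reflection_complex)
  moreover have "rGamma y = inverse (Gamma y)" by (rule rGamma_inverse_Gamma)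
  ultimately show ?thesis using Gamma_nonzero[OF assms] by (simp add: field_simps)
qed

lemma Gamma_reflection_pair_sum:
  fixes v x y :: complex
  assumes xy: "x + y = v" and x: "x \<notin> \<int>\<^sub>\<le>\<^sub>0" and y: "y \<notin> \<int>\<^sub>\<le>\<^sub>0" and v: "v \<notin> \<int>\<^sub>\<le>\<^sub>0"
    and sin: "sin (of_real pi * v) \<noteq> 0"
  shows "Gamma x * Gamma (1 - v) * rGamma (x + 1 - v) + Gamma y * Gamma (1 - v) * rGamma (y + 1 - v)
       = Gamma x * Gamma y * cos ((y - x) * of_real pi / 2) / (Gamma v * cos (v * of_real pi / 2))"
proof -
  have sum_sin: "sin (of_real pi * y) + sin (of_real pi * x)
      = 2 * sin (v * of_real pi / 2) * cos ((y - x) * of_real pi / 2)"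
  proof -
    have "(of_real pi * y + of_real pi * x) / 2 = v * of_real pi / 2"
      and "(of_real pi * y - of_real pi * x) / 2 = (y - x) * of_real pi / 2"
      using xy by (auto simp: algebra_simps)
    thus ?thesis using sin_plus_sin[of "of_real pi * y" "of_real pi * x"] by (simp only:)
  qed
  have sin_double: "sin (of_real pi * v) = 2 * sin (v * of_real pi / 2) * cos (v * of_real pi / 2)"
    using sin_double[of "v * of_real pi / 2"] by (simp add: mult.commute)
  have Gamma_1v: "Gamma (1 - v) = of_real pi / (sin (of_real pi * v) * Gamma v)"
    using Gamma_reflection_complex[of v] Gamma_nonzero[OF v] sin by (simp add: field_simps)
  have "sin (v * of_real pi / 2) \<noteq> 0" "cos (v * of_real pi / 2) \<noteq> 0"
    using sin unfolding sin_double by auto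
  have "x + 1 - v = 1 - y" "y + 1 - v = 1 - x" using xy by (simp_all add: algebra_simps)
  hence "Gamma x * Gamma (1 - v) * rGamma (x + 1 - v) + Gamma y * Gamma (1 - v) * rGamma (y + 1 - v)
      = Gamma (1 - v) * Gamma x * Gamma y * (sin (of_real pi * y) + sin (of_real pi * x)) / of_real pi"
    by (simp only: rGamma_one_minus x y not_False_eq_True) (simp add: field_simps)
  also have "\<dots> = Gamma x * Gamma y * cos ((y - x) * of_real pi / 2) / (Gamma v * cos (v * of_real pi / 2))"
    unfolding sum_sin Gamma_1v sin_double
    using \<open>sin (v * of_real pi / 2) \<noteq> 0\<close> \<open>cos (v * of_real pi / 2) \<noteq> 0\<close> Gamma_nonzero[OF v]
    by (simp add: field_simps)
  finally show ?thesis .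
qed

lemma sin_pi_times_neq_0:
  fixes v :: complex assumes "Re v < 1" and "v \<notin> \<int>\<^sub>\<le>\<^sub>0"
  shows "sin (of_real pi * v) \<noteq> 0"
proof
  assume "sin (of_real pi * v) = 0"
  then obtain n :: int where "of_real pi * v = of_real (of_int n * pi)" by (auto simp: sin_eq_0)
  hence "v = of_int n" by (simp add: field_simps)
  with assms show False by (auto simp: of_int_in_nonpos_Ints_iff)
qed

theorem well_poised_8F7_sum:
  fixes v p q t :: complex
  assumes v: "Re v < 1" "v \<notin> \<int>\<^sub>\<le>\<^sub>0" and t: "2 * t\<^sup>2 = p\<^sup>2 + q\<^sup>2" and w: "v / 2 \<notin> \<int>\<^sub>\<le>\<^sub>0"
    and l: "v / 2 - t \<notin> \<int>\<^sub>\<le>\<^sub>0" "v / 2 + t \<notin> \<int>\<^sub>\<le>\<^sub>0"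
    and g: "v / 2 - p \<notin> \<int>\<^sub>\<le>\<^sub>0" "v / 2 - q \<notin> \<int>\<^sub>\<le>\<^sub>0"
           "v / 2 + p \<notin> \<int>\<^sub>\<le>\<^sub>0" "v / 2 + q \<notin> \<int>\<^sub>\<le>\<^sub>0"
  shows "hyp_term [v, 1 + v/2, 1 + (v/2 - t), 1 + (v/2 + t), v/2 - p, v/2 - q, v/2 + p, v/2 + q]
            [v/2, v/2 - t, v/2 + t, 1 + (v/2 - p), 1 + (v/2 - q), 1 + (v/2 + p), 1 + (v/2 + q)] 1
         sums ((v/2 - p) * (v/2 - q) * (v/2 + p) * (v/2 + q) / (2 * v * (v/2 - t) * (v/2 + t) * Gamma v)
               * (Gamma (v/2 + p) * Gamma (v/2 - p) * (cos (p * of_real pi) / cos (v * of_real pi / 2))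
                + Gamma (v/2 + q) * Gamma (v/2 - q) * (cos (q * of_real pi) / cos (v * of_real pi / 2))))"
proof -
  define K where "K = (v/2 - p) * (v/2 - q) * (v/2 + p) * (v/2 + q) / (2 * v * (v/2 - t) * (v/2 + t))"
  define G where "G x = Gamma x * Gamma (1 - v) * rGamma (x + 1 - v)" for x
  have "hyp_term [v, 1 + v/2, 1 + (v/2 - t), 1 + (v/2 + t), v/2 - p, v/2 - q, v/2 + p, v/2 + q]
            [v/2, v/2 - t, v/2 + t, 1 + (v/2 - p), 1 + (v/2 - q), 1 + (v/2 + p), 1 + (v/2 + q)] 1
        sums (K * (G (v/2 - p) + G (v/2 - q) + G (v/2 + p) + G (v/2 + q)))"
    unfolding hyp_term_well_poised_8F7[OF t w l g, folded K_def] G_def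
    by (intro sums_mult sums_add gauss_sum v(1) g)
  moreover have pair_p: "G (v/2 - p) + G (v/2 + p)
      = Gamma (v/2 - p) * Gamma (v/2 + p) * cos (p * of_real pi) / (Gamma v * cos (v * of_real pi / 2))"
    using Gamma_reflection_pair_sum[OF _ g(1,3) v(2) sin_pi_times_neq_0[OF v]]
    unfolding G_def by (simp add: algebra_simps)
  moreover have pair_q: "G (v/2 - q) + G (v/2 + q)
      = Gamma (v/2 - q) * Gamma (v/2 + q) * cos (q * of_real pi) / (Gamma v * cos (v * of_real pi / 2))"
    using Gamma_reflection_pair_sum[OF _ g(2,4) v(2) sin_pi_times_neq_0[OF v]]
    unfolding G_def by (simp add: algebra_simps)
  moreover have "K * (G (v/2 - p) + G (v/2 - q) + G (v/2 + p) + G (v/2 + q))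
      = K * ((G (v/2 - p) + G (v/2 + p)) + (G (v/2 - q) + G (v/2 + q)))"
    by (simp only: add_ac)
  moreover have "N / D * (A * B * X / (\<Gamma> * C) + A' * B' * Y / (\<Gamma> * C))
      = N / (D * \<Gamma>) * (B * A * (X / C) + B' * A' * (Y / C))"
    for N D A B A' B' X Y \<Gamma> C :: complex
    by (simp add: divide_inverse inverse_mult_distrib algebra_simps)
  ultimately show ?thesis unfolding K_def by (simp only:)
qed

lemma not_nonpos_Ints_if_Re_mult_pos:
  fixes v c :: complex assumes "Re (v * c) > 0" and "Re c > 0"
  shows "v \<notin> \<int>\<^sub>\<le>\<^sub>0"
proof
  assume "v \<in> \<int>\<^sub>\<le>\<^sub>0"
  then obtain k where "v = - of_nat k" by (elim nonpos_Ints_cases')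
  with assms(1) have "real k * Re c < 0" by simp
  moreover have "0 \<le> real k * Re c" using assms(2) by simp
  ultimately show False by linarith
qed

lemma not_nonpos_Ints_if_one_plus_Re_mult_pos:
  fixes c z :: complex assumes "Re (c * z) > 0" and "1 + z \<notin> \<int>\<^sub>\<le>\<^sub>0"
  shows "z \<notin> \<int>\<^sub>\<le>\<^sub>0"
proof (rule not_nonpos_Ints_if_one_plus[OF assms(2)])
  show "z \<noteq> 0" using assms(1) by auto
qed

lemma well_poised_8F7_parameters:
  fixes v a b c :: complex
  assumes c: "c \<noteq> 0"
    and "Re (v * c - a - b) > 0" "Re (v * c - a + b) > 0" "Re (v * c + a + b) > 0" "Re (v * c + a - b) > 0"
    and "1 + (v/2 - a/(2 * c) - b/(2 * c)) \<notin> \<int>\<^sub>\<le>\<^sub>0" "1 + (v/2 - a/(2 * c) + b/(2 * c)) \<notin> \<int>\<^sub>\<le>\<^sub>0"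
        "1 + (v/2 + a/(2 * c) + b/(2 * c)) \<notin> \<int>\<^sub>\<le>\<^sub>0" "1 + (v/2 + a/(2 * c) - b/(2 * c)) \<notin> \<int>\<^sub>\<le>\<^sub>0"
  shows "v/2 - (a + b)/(2 * c) \<notin> \<int>\<^sub>\<le>\<^sub>0" "v/2 - (a - b)/(2 * c) \<notin> \<int>\<^sub>\<le>\<^sub>0"
    "v/2 + (a + b)/(2 * c) \<notin> \<int>\<^sub>\<le>\<^sub>0" "v/2 + (a - b)/(2 * c) \<notin> \<int>\<^sub>\<le>\<^sub>0"
proof -
  have sg: "v/2 - a/(2 * c) - b/(2 * c) = v/2 - (a + b)/(2 * c)" "v/2 - a/(2 * c) + b/(2 * c) = v/2 - (a - b)/(2 * c)"
    "v/2 + a/(2 * c) + b/(2 * c) = v/2 + (a + b)/(2 * c)" "v/2 + a/(2 * c) - b/(2 * c) = v/2 + (a - b)/(2 * c)"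
    by (simp_all add: add_divide_distrib diff_divide_distrib)
  have "2 * c * (v/2 - (a + b)/(2 * c)) = v * c - a - b" "2 * c * (v/2 - (a - b)/(2 * c)) = v * c - a + b"
    "2 * c * (v/2 + (a + b)/(2 * c)) = v * c + a + b" "2 * c * (v/2 + (a - b)/(2 * c)) = v * c + a - b"
    using c by (simp_all add: field_simps)
  with assms(2-) show "v/2 - (a + b)/(2 * c) \<notin> \<int>\<^sub>\<le>\<^sub>0" "v/2 - (a - b)/(2 * c) \<notin> \<int>\<^sub>\<le>\<^sub>0"
    "v/2 + (a + b)/(2 * c) \<notin> \<int>\<^sub>\<le>\<^sub>0" "v/2 + (a - b)/(2 * c) \<notin> \<int>\<^sub>\<le>\<^sub>0"
    unfolding sg by (metis not_nonpos_Ints_if_one_plus_Re_mult_pos)+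
qed

lemma well_poised_8F7_coefficient:
  fixes v a b c s :: complex
  assumes c: "c \<noteq> 0" and s: "s\<^sup>2 = a\<^sup>2 + b\<^sup>2" and v: "v \<noteq> 0"
    and l: "v/2 - s/(2 * c) \<noteq> 0" "v/2 + s/(2 * c) \<noteq> 0"
  shows "(v/2 - (a + b)/(2 * c)) * (v/2 - (a - b)/(2 * c)) * (v/2 + (a + b)/(2 * c)) * (v/2 + (a - b)/(2 * c))
          / (2 * v * (v/2 - s/(2 * c)) * (v/2 + s/(2 * c)) * G)
       = (v * c - a - b) * (v * c + a + b) * (v * c - a + b) * (v * c + a - b)
          / (8 * (v^3 * c^4 - a\<^sup>2 * v * c\<^sup>2 - b\<^sup>2 * v * c\<^sup>2) * G)"
proof -
  define E where "E = v^2 * c^2 - a\<^sup>2 - b\<^sup>2"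
  have "(v/2 - s/(2 * c)) * (v/2 + s/(2 * c)) = E / (4 * c^2)"
    unfolding E_def using c s by (simp add: field_simps power2_eq_square)
  moreover have "(v/2 - (a + b)/(2 * c)) * (v/2 - (a - b)/(2 * c)) * (v/2 + (a + b)/(2 * c)) * (v/2 + (a - b)/(2 * c))
      = (v * c - a - b) * (v * c + a + b) * (v * c - a + b) * (v * c + a - b) / (16 * c^4)"
    using c by (simp add: field_simps) (simp add: algebra_simps power2_eq_square power4_eq_xxxx)
  moreover have "v^3 * c^4 - a\<^sup>2 * v * c\<^sup>2 - b\<^sup>2 * v * c\<^sup>2 = v * c^2 * E"
    unfolding E_def by (simp add: algebra_simps power2_eq_square power3_eq_cube power4_eq_xxxx)
  moreover have "E \<noteq> 0" using l c calculation(1) by auto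
  moreover have "N / (16 * c^4) / (2 * v * (E / (4 * c^2)) * G) = N / (8 * (v * c^2 * E) * G)" for N
    using c v \<open>E \<noteq> 0\<close> by (simp add: field_simps power2_eq_square power4_eq_xxxx)
  ultimately show ?thesis by (simp only: mult.assoc[of "2 * v"])
qed

theorem mainTheorem8:
  fixes v a b c s :: complex
  assumes hv: "Re v < 1" and hc: "Re c > 0"
    and h1: "Re (v * c + a + b) > 0" and h2: "Re (v * c + a - b) > 0"
    and h3: "Re (v * c - a + b) > 0" and h4: "Re (v * c - a - b) > 0"
    and hs: "s\<^sup>2 = a\<^sup>2 + b\<^sup>2"
    and hcos: "cos (v * of_real pi / 2) \<noteq> 0"
    and hv2: "v / 2 \<notin> \<int>\<^sub>\<le>\<^sub>0"
    and hl1: "v/2 - s/(2 * c) \<notin> \<int>\<^sub>\<le>\<^sub>0"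
    and hl2: "v/2 + s/(2 * c) \<notin> \<int>\<^sub>\<le>\<^sub>0"
    and hs3: "1 + (v/2 - a/(2 * c) - b/(2 * c)) \<notin> \<int>\<^sub>\<le>\<^sub>0"
    and hs4: "1 + (v/2 - a/(2 * c) + b/(2 * c)) \<notin> \<int>\<^sub>\<le>\<^sub>0"
    and hs5: "1 + (v/2 + a/(2 * c) + b/(2 * c)) \<notin> \<int>\<^sub>\<le>\<^sub>0"
    and hs6: "1 + (v/2 + a/(2 * c) - b/(2 * c)) \<notin> \<int>\<^sub>\<le>\<^sub>0"
  shows "let l1 = v/2 - s/(2 * c); l2 = v/2 + s/(2 * c);
             sg3 = v/2 - a/(2 * c) - b/(2 * c); sg4 = v/2 - a/(2 * c) + b/(2 * c);
             sg5 = v/2 + a/(2 * c) + b/(2 * c); sg6 = v/2 + a/(2 * c) - b/(2 * c);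
             P = (v * c - a - b) * (v * c + a + b) * (v * c - a + b) * (v * c + a - b)
         in hyp_term [v, 1 + v/2, 1 + l1, 1 + l2, sg3, sg4, sg5, sg6]
                     [v/2, l1, l2, 1 + sg3, 1 + sg4, 1 + sg5, 1 + sg6] 1
            sums (P / (8 * (v^3 * c^4 - a\<^sup>2 * v * c\<^sup>2 - b\<^sup>2 * v * c\<^sup>2) * Gamma v)
                  * (Gamma sg5 * Gamma sg3 * (cos ((a + b) * of_real pi / (2 * c)) / cos (v * of_real pi / 2))
                   + Gamma sg6 * Gamma sg4 * (cos ((a - b) * of_real pi / (2 * c)) / cos (v * of_real pi / 2))))"
proof -
  define p q where "p = (a + b) / (2 * c)" and "q = (a - b) / (2 * c)"
  have c: "c \<noteq> 0" using hc by auto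
  have v: "v \<notin> \<int>\<^sub>\<le>\<^sub>0" using h1 h4 hc by (intro not_nonpos_Ints_if_Re_mult_pos) simp_all
  note g = well_poised_8F7_parameters[OF c h4 h3 h1 h2 hs3 hs4 hs5 hs6, folded p_def q_def]
  have t: "2 * (s / (2 * c))\<^sup>2 = p\<^sup>2 + q\<^sup>2"
    using hs c by (simp add: p_def q_def power_divide field_simps power2_eq_square)
  have "v \<noteq> 0" "v/2 - s/(2 * c) \<noteq> 0" "v/2 + s/(2 * c) \<noteq> 0"
    using v hl1 hl2 by auto
  note coefficient = well_poised_8F7_coefficient[OF c hs this, of "Gamma v", folded p_def q_def]
  have "v/2 - a/(2 * c) - b/(2 * c) = v/2 - p" "v/2 - a/(2 * c) + b/(2 * c) = v/2 - q"
    "v/2 + a/(2 * c) + b/(2 * c) = v/2 + p" "v/2 + a/(2 * c) - b/(2 * c) = v/2 + q"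
    and "(a + b) * of_real pi / (2 * c) = p * of_real pi" "(a - b) * of_real pi / (2 * c) = q * of_real pi"
    by (simp_all add: p_def q_def add_divide_distrib diff_divide_distrib algebra_simps)
  with well_poised_8F7_sum[OF hv v t hv2 hl1 hl2 g] show ?thesis
    unfolding Let_def coefficient[symmetric] by (simp only:)
qed


end
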